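(* For $i\in\{1,2\}$, let $G_i$ be a graph with maximum degree $\Delta_i$ and degeneracy $d_i$ that contains $K_{s_i,t_i}$ as a subgraph, where $1\leq s_i\leq t_i$. Then $$\max\{d_1d_2,\ \min\{s_1t_2,s_2t_1\},\ \min\{\Delta_1,\Delta_2\}\}\ \leq\ \operatorname{degen}(G_1\times G_2)\ \leq\ \min\{d_1\Delta_2,\ d_2\Delta_1\}.$$
   Context: The degeneracy $\operatorname{degen}(G)$ of a graph $G$ is the minimum integer $d$ such that every subgraph of $G$ has minimum degree at most $d$. The direct product $G_1 \times G_2$ has vertex set $V(G_1)\times V(G_2)$, with $(a,v)(b,u)$ an edge iff $ab\in E(G_1)$ and $uv\in E(G_2)$. *)

theory Defs
  imports Main
begin

definition graph :: "'a set \<Rightarrow> ('a \<Rightarrow> 'a \<Rightarrow> bool) \<Rightarrow> bool" where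
  "graph V E \<longleftrightarrow> finite V \<and> (\<forall>x y. E x y \<longrightarrow> x \<in> V \<and> y \<in> V)
     \<and> (\<forall>x y. E x y \<longrightarrow> E y x) \<and> (\<forall>x. \<not> E x x)"

definition degree :: "'a set \<Rightarrow> ('a \<Rightarrow> 'a \<Rightarrow> bool) \<Rightarrow> 'a \<Rightarrow> nat" where
  "degree V E x = card {y \<in> V. E x y}"

definition max_degree :: "'a set \<Rightarrow> ('a \<Rightarrow> 'a \<Rightarrow> bool) \<Rightarrow> nat" where
  "max_degree V E = Max (degree V E ` V)"

definition min_degree :: "'a set \<Rightarrow> ('a \<Rightarrow> 'a \<Rightarrow> bool) \<Rightarrow> nat" where
  "min_degree V E = Min (degree V E ` V)"

definition subgraph :: "'a set \<Rightarrow> ('a \<Rightarrow> 'a \<Rightarrow> bool) \<Rightarrow> 'a set \<Rightarrow> ('a \<Rightarrow> 'a \<Rightarrow> bool) \<Rightarrow> bool" where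
  "subgraph W F V E \<longleftrightarrow> graph W F \<and> W \<subseteq> V \<and> (\<forall>x y. F x y \<longrightarrow> E x y)"

definition degeneracy :: "'a set \<Rightarrow> ('a \<Rightarrow> 'a \<Rightarrow> bool) \<Rightarrow> nat" where
  "degeneracy V E = (LEAST d. \<forall>W F. subgraph W F V E \<and> W \<noteq> {} \<longrightarrow> min_degree W F \<le> d)"

definition contains_Kst :: "'a set \<Rightarrow> ('a \<Rightarrow> 'a \<Rightarrow> bool) \<Rightarrow> nat \<Rightarrow> nat \<Rightarrow> bool" where
  "contains_Kst V E s t \<longleftrightarrow> (\<exists>A B. A \<subseteq> V \<and> B \<subseteq> V \<and> A \<inter> B = {} \<and> card A = s \<and> card B = t
      \<and> (\<forall>a\<in>A. \<forall>b\<in>B. E a b))"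

definition dprod_edge :: "('a \<Rightarrow> 'a \<Rightarrow> bool) \<Rightarrow> ('b \<Rightarrow> 'b \<Rightarrow> bool) \<Rightarrow> 'a \<times> 'b \<Rightarrow> 'a \<times> 'b \<Rightarrow> bool" where
  "dprod_edge E1 E2 p q \<longleftrightarrow> E1 (fst p) (fst q) \<and> E2 (snd p) (snd q)"

end

theory Submission
  imports Defs
begin

text \<open>Upper bound: a subgraph of the product projects onto a vertex set of \<open>G\<^sub>1\<close>, which has a vertex
  \<open>x\<close> of induced degree at most \<open>d\<^sub>1\<close>; any vertex \<open>(x, y)\<close> of the subgraph then has at most
  \<open>d\<^sub>1 \<Delta>\<^sub>2\<close> neighbours. Lower bounds: the product of vertex sets witnessing \<open>d\<^sub>1\<close> and \<open>d\<^sub>2\<close> has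
  all induced degrees at least \<open>d\<^sub>1 d\<^sub>2\<close>; and bicliques between \<open>A\<^sub>i\<close> and \<open>B\<^sub>i\<close> in both factors give the set
  \<open>A\<^sub>1 \<times> B\<^sub>2 \<union> B\<^sub>1 \<times> A\<^sub>2\<close>, complete bipartite between its two parts, which yields both the
  \<open>K\<^sub>s\<^sub>,\<^sub>t\<close> bound and, using stars around vertices of maximum degree, the \<open>min \<Delta>\<^sub>1 \<Delta>\<^sub>2\<close> bound.\<close>

definition induced :: "('a \<Rightarrow> 'a \<Rightarrow> bool) \<Rightarrow> 'a set \<Rightarrow> 'a \<Rightarrow> 'a \<Rightarrow> bool" where
  "induced E W p q \<longleftrightarrow> E p q \<and> p \<in> W \<and> q \<in> W"

lemma graph_finite: "graph V E \<Longrightarrow> finite V"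
  unfolding graph_def by blast

lemma graph_sym: "graph V E \<Longrightarrow> E x y \<Longrightarrow> E y x"
  unfolding graph_def by blast

lemma subgraph_induced:
  assumes "graph V E" "W \<subseteq> V"
  shows "subgraph W (induced E W) V E"
  using assms finite_subset unfolding subgraph_def graph_def induced_def by blast

lemma graph_dprod:
  assumes "graph V1 E1" "graph V2 E2"
  shows "graph (V1 \<times> V2) (dprod_edge E1 E2)"
  using assms unfolding graph_def dprod_edge_def by auto

lemma degree_induced: "x \<in> W \<Longrightarrow> degree W (induced E W) x = degree W E x"
  unfolding degree_def induced_def by (rule arg_cong[where f = card]) auto

lemma degree_mono:
  assumes "finite A" "W \<subseteq> A" "\<And>p q. F p q \<Longrightarrow> E p q"
  shows "degree W F x \<le> degree A E x"
  unfolding degree_def using assms by (intro card_mono) auto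

lemma degree_dprod:
  "degree (A \<times> B) (dprod_edge E1 E2) (x, y) = degree A E1 x * degree B E2 y"
proof -
  have "{q \<in> A \<times> B. dprod_edge E1 E2 (x, y) q} = {a \<in> A. E1 x a} \<times> {b \<in> B. E2 y b}"
    unfolding dprod_edge_def by auto
  then show ?thesis
    unfolding degree_def by (simp add: card_cartesian_product)
qed

lemma degree_le_max_degree: "graph V E \<Longrightarrow> x \<in> V \<Longrightarrow> degree V E x \<le> max_degree V E"
  unfolding max_degree_def by (simp add: graph_finite)

lemma max_degree_attained:
  assumes "finite V" "V \<noteq> {}"
  obtains x where "x \<in> V" "degree V E x = max_degree V E"
proof -
  have "max_degree V E \<in> degree V E ` V"
    unfolding max_degree_def using assms by (intro Max_in) auto
  with that show thesis by (metis imageE)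
qed

lemma min_degree_le_degree: "finite W \<Longrightarrow> x \<in> W \<Longrightarrow> min_degree W F \<le> degree W F x"
  unfolding min_degree_def by simp

lemma min_degree_attained:
  assumes "finite W" "W \<noteq> {}"
  obtains x where "x \<in> W" "degree W F x = min_degree W F"
proof -
  have "min_degree W F \<in> degree W F ` W"
    unfolding min_degree_def using assms by (intro Min_in) auto
  with that show thesis by (metis imageE)
qed

lemma min_degree_le_degeneracy:
  assumes "graph V E" "subgraph W F V E" "W \<noteq> {}"
  shows "min_degree W F \<le> degeneracy V E"
proof -
  let ?bounds = "\<lambda>d. \<forall>W F. subgraph W F V E \<and> W \<noteq> {} \<longrightarrow> min_degree W F \<le> d"
  have "?bounds (card V)"
  proof (intro allI impI)
    fix W F assume "subgraph W F V E \<and> W \<noteq> {}"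
    then have fin: "finite W" and "W \<subseteq> V" and "W \<noteq> {}"
      unfolding subgraph_def graph_def by auto
    then obtain x where x: "x \<in> W" by blast
    have "min_degree W F \<le> degree W F x" using fin x by (rule min_degree_le_degree)
    also have "\<dots> \<le> card W" unfolding degree_def using fin by (intro card_mono) auto
    also have "\<dots> \<le> card V" using \<open>W \<subseteq> V\<close> assms(1) by (simp add: card_mono graph_finite)
    finally show "min_degree W F \<le> card V" .
  qed
  then have "?bounds (degeneracy V E)"
    unfolding degeneracy_def by (rule LeastI)
  then show ?thesis using assms(2,3) by blast
qed

lemma degeneracy_leI:
  assumes "\<And>W F. subgraph W F V E \<Longrightarrow> W \<noteq> {} \<Longrightarrow> min_degree W F \<le> d"
  shows "degeneracy V E \<le> d"
  unfolding degeneracy_def using assms by (intro Least_le) blast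

lemma low_degree_vertex:
  assumes "graph V E" "W \<subseteq> V" "W \<noteq> {}"
  obtains x where "x \<in> W" "degree W E x \<le> degeneracy V E"
proof -
  have "finite W" using assms(1,2) finite_subset graph_finite by blast
  then obtain x where x: "x \<in> W" "degree W (induced E W) x = min_degree W (induced E W)"
    using assms(3) by (rule min_degree_attained)
  have "min_degree W (induced E W) \<le> degeneracy V E"
    using assms by (intro min_degree_le_degeneracy subgraph_induced)
  with x degree_induced show thesis by (metis that)
qed

lemma le_degeneracyI:
  assumes "graph V E" "W \<subseteq> V" "W \<noteq> {}" "\<And>x. x \<in> W \<Longrightarrow> k \<le> degree W E x"
  shows "k \<le> degeneracy V E"
proof -
  have "finite W" using assms(1,2) finite_subset graph_finite by blast
  then obtain x where x: "x \<in> W" "degree W (induced E W) x = min_degree W (induced E W)"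
    using assms(3) by (rule min_degree_attained)
  then have "k \<le> min_degree W (induced E W)"
    using assms(4) degree_induced by metis
  also have "\<dots> \<le> degeneracy V E"
    using assms(1-3) by (intro min_degree_le_degeneracy subgraph_induced)
  finally show ?thesis .
qed

lemma dense_vertex_set:
  assumes "0 < degeneracy V E"
  obtains W where "W \<subseteq> V" "W \<noteq> {}" "\<And>x. x \<in> W \<Longrightarrow> degeneracy V E \<le> degree W E x"
proof -
  have "\<exists>W F. subgraph W F V E \<and> W \<noteq> {} \<and> degeneracy V E \<le> min_degree W F"
  proof (rule ccontr)
    assume "\<not> ?thesis"
    then have "degeneracy V E \<le> degeneracy V E - 1"
      by (intro degeneracy_leI) force
    then show False using assms by simp
  qed
  then obtain W F where sub: "subgraph W F V E" "W \<noteq> {}" and d: "degeneracy V E \<le> min_degree W F"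
    by blast
  have fin: "finite W" and FE: "\<And>p q. F p q \<Longrightarrow> E p q"
    using sub(1) unfolding subgraph_def graph_def by auto
  have "degeneracy V E \<le> degree W E x" if "x \<in> W" for x
  proof -
    have "min_degree W F \<le> degree W F x" using fin that by (rule min_degree_le_degree)
    also have "\<dots> \<le> degree W E x" using fin FE by (intro degree_mono) auto
    finally show ?thesis using d by linarith
  qed
  with sub show thesis using that unfolding subgraph_def by blast
qed

lemma subgraph_dprodD:
  assumes "subgraph W F (V1 \<times> V2) (dprod_edge E1 E2)"
  shows "finite W" "W \<subseteq> fst ` W \<times> snd ` W" "fst ` W \<subseteq> V1" "snd ` W \<subseteq> V2"
    "\<And>p q. F p q \<Longrightarrow> dprod_edge E1 E2 p q"
proof -
  show "finite W" "\<And>p q. F p q \<Longrightarrow> dprod_edge E1 E2 p q"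
    using assms unfolding subgraph_def graph_def by auto
  have "W \<subseteq> V1 \<times> V2" using assms unfolding subgraph_def by blast
  then show "fst ` W \<subseteq> V1" "snd ` W \<subseteq> V2" by auto
  show "W \<subseteq> fst ` W \<times> snd ` W" by (auto intro: rev_image_eqI)
qed

lemma degeneracy_dprod_le_fst:
  assumes G1: "graph V1 E1" and G2: "graph V2 E2"
  shows "degeneracy (V1 \<times> V2) (dprod_edge E1 E2) \<le> degeneracy V1 E1 * max_degree V2 E2"
proof (rule degeneracy_leI)
  fix W F assume sub: "subgraph W F (V1 \<times> V2) (dprod_edge E1 E2)" and "W \<noteq> {}"
  note W = subgraph_dprodD[OF sub]
  have "fst ` W \<noteq> {}" using \<open>W \<noteq> {}\<close> by simp
  with G1 W(3) obtain x where x: "x \<in> fst ` W" "degree (fst ` W) E1 x \<le> degeneracy V1 E1"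
    by (rule low_degree_vertex)
  then obtain y where xy: "(x, y) \<in> W" by force
  have "min_degree W F \<le> degree W F (x, y)"
    using W(1) xy by (rule min_degree_le_degree)
  also have "\<dots> \<le> degree (fst ` W \<times> V2) (dprod_edge E1 E2) (x, y)"
    using W G2 by (intro degree_mono) (auto simp: graph_finite)
  also have "\<dots> = degree (fst ` W) E1 x * degree V2 E2 y"
    by (rule degree_dprod)
  also have "\<dots> \<le> degeneracy V1 E1 * max_degree V2 E2"
    using x(2) degree_le_max_degree[OF G2] xy W(4) by (intro mult_mono) auto
  finally show "min_degree W F \<le> degeneracy V1 E1 * max_degree V2 E2" .
qed

lemma degeneracy_dprod_le_snd:
  assumes G1: "graph V1 E1" and G2: "graph V2 E2"
  shows "degeneracy (V1 \<times> V2) (dprod_edge E1 E2) \<le> degeneracy V2 E2 * max_degree V1 E1"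
proof (rule degeneracy_leI)
  fix W F assume sub: "subgraph W F (V1 \<times> V2) (dprod_edge E1 E2)" and "W \<noteq> {}"
  note W = subgraph_dprodD[OF sub]
  have "snd ` W \<noteq> {}" using \<open>W \<noteq> {}\<close> by simp
  with G2 W(4) obtain y where y: "y \<in> snd ` W" "degree (snd ` W) E2 y \<le> degeneracy V2 E2"
    by (rule low_degree_vertex)
  then obtain x where xy: "(x, y) \<in> W" by force
  have "min_degree W F \<le> degree W F (x, y)"
    using W(1) xy by (rule min_degree_le_degree)
  also have "\<dots> \<le> degree (V1 \<times> snd ` W) (dprod_edge E1 E2) (x, y)"
    using W G1 by (intro degree_mono) (auto simp: graph_finite)
  also have "\<dots> = degree (snd ` W) E2 y * degree V1 E1 x"
    by (simp add: degree_dprod)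
  also have "\<dots> \<le> degeneracy V2 E2 * max_degree V1 E1"
    using y(2) degree_le_max_degree[OF G1] xy W(3) by (intro mult_mono) auto
  finally show "min_degree W F \<le> degeneracy V2 E2 * max_degree V1 E1" .
qed

lemma degeneracy_mult_le_degeneracy_dprod:
  assumes G1: "graph V1 E1" and G2: "graph V2 E2"
  shows "degeneracy V1 E1 * degeneracy V2 E2 \<le> degeneracy (V1 \<times> V2) (dprod_edge E1 E2)"
proof (cases "degeneracy V1 E1 = 0 \<or> degeneracy V2 E2 = 0")
  case True
  then show ?thesis by auto
next
  case False
  then obtain W1 W2
    where W1: "W1 \<subseteq> V1" "W1 \<noteq> {}" "\<And>x. x \<in> W1 \<Longrightarrow> degeneracy V1 E1 \<le> degree W1 E1 x"
      and W2: "W2 \<subseteq> V2" "W2 \<noteq> {}" "\<And>y. y \<in> W2 \<Longrightarrow> degeneracy V2 E2 \<le> degree W2 E2 y"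
    by (metis dense_vertex_set neq0_conv)
  show ?thesis
  proof (rule le_degeneracyI[OF graph_dprod[OF G1 G2]])
    show "W1 \<times> W2 \<subseteq> V1 \<times> V2" "W1 \<times> W2 \<noteq> {}" using W1 W2 by auto
    fix p assume "p \<in> W1 \<times> W2"
    then obtain x y where "p = (x, y)" "x \<in> W1" "y \<in> W2" by blast
    then show "degeneracy V1 E1 * degeneracy V2 E2 \<le> degree (W1 \<times> W2) (dprod_edge E1 E2) p"
      using mult_le_mono[OF W1(3) W2(3)] by (simp add: degree_dprod)
  qed
qed

lemma biclique_dprod_le_degeneracy:
  assumes G1: "graph V1 E1" and G2: "graph V2 E2"
    and A1: "A1 \<subseteq> V1" "B1 \<subseteq> V1" "\<forall>a\<in>A1. \<forall>b\<in>B1. E1 a b"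
    and A2: "A2 \<subseteq> V2" "B2 \<subseteq> V2" "\<forall>a\<in>A2. \<forall>b\<in>B2. E2 a b"
  shows "min (card A1 * card B2) (card B1 * card A2) \<le> degeneracy (V1 \<times> V2) (dprod_edge E1 E2)"
proof (cases "A1 \<times> B2 = {} \<or> B1 \<times> A2 = {}")
  case True
  then show ?thesis by auto
next
  case False
  let ?W = "A1 \<times> B2 \<union> B1 \<times> A2"
  have "finite A1" "finite B1" "finite A2" "finite B2"
    using A1 A2 G1 G2 finite_subset graph_finite by metis+
  then have fin: "finite ?W" by simp
  show ?thesis
  proof (rule le_degeneracyI[OF graph_dprod[OF G1 G2]])
    show "?W \<subseteq> V1 \<times> V2" "?W \<noteq> {}" using A1 A2 False by auto
    fix p assume p: "p \<in> ?W"
    then consider "p \<in> A1 \<times> B2" | "p \<in> B1 \<times> A2" by blast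
    then show "min (card A1 * card B2) (card B1 * card A2) \<le> degree ?W (dprod_edge E1 E2) p"
    proof cases
      case 1
      then have "B1 \<times> A2 \<subseteq> {q \<in> ?W. dprod_edge E1 E2 p q}"
        using A1 A2 graph_sym[OF G2] by (auto simp: dprod_edge_def)
      then have "card (B1 \<times> A2) \<le> degree ?W (dprod_edge E1 E2) p"
        unfolding degree_def using fin by (intro card_mono) auto
      then show ?thesis by (simp add: card_cartesian_product)
    next
      case 2
      then have "A1 \<times> B2 \<subseteq> {q \<in> ?W. dprod_edge E1 E2 p q}"
        using A1 A2 graph_sym[OF G1] by (auto simp: dprod_edge_def)
      then have "card (A1 \<times> B2) \<le> degree ?W (dprod_edge E1 E2) p"
        unfolding degree_def using fin by (intro card_mono) auto
      then show ?thesis by (simp add: card_cartesian_product)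
    qed
  qed
qed

lemma min_max_degree_le_degeneracy_dprod:
  assumes G1: "graph V1 E1" and G2: "graph V2 E2" and "V1 \<noteq> {}" "V2 \<noteq> {}"
  shows "min (max_degree V1 E1) (max_degree V2 E2) \<le> degeneracy (V1 \<times> V2) (dprod_edge E1 E2)"
proof -
  obtain v where v: "v \<in> V1" "degree V1 E1 v = max_degree V1 E1"
    using graph_finite[OF G1] \<open>V1 \<noteq> {}\<close> by (rule max_degree_attained)
  obtain u where u: "u \<in> V2" "degree V2 E2 u = max_degree V2 E2"
    using graph_finite[OF G2] \<open>V2 \<noteq> {}\<close> by (rule max_degree_attained)
  have "min (card {v} * card {b \<in> V2. E2 u b}) (card {b \<in> V1. E1 v b} * card {u})
      \<le> degeneracy (V1 \<times> V2) (dprod_edge E1 E2)"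
    using v(1) u(1) by (intro biclique_dprod_le_degeneracy[OF G1 G2]) auto
  then show ?thesis
    using v(2) u(2) unfolding degree_def by (simp add: min.commute)
qed

theorem mainTheorem5:
  fixes V1 :: "'a set" and E1 :: "'a \<Rightarrow> 'a \<Rightarrow> bool"
    and V2 :: "'b set" and E2 :: "'b \<Rightarrow> 'b \<Rightarrow> bool"
    and s1 t1 s2 t2 :: nat
  assumes G1: "graph V1 E1" and G2: "graph V2 E2"
    and st1: "1 \<le> s1" "s1 \<le> t1" and st2: "1 \<le> s2" "s2 \<le> t2"
    and K1: "contains_Kst V1 E1 s1 t1" and K2: "contains_Kst V2 E2 s2 t2"
  shows "max (degeneracy V1 E1 * degeneracy V2 E2)
             (max (min (s1 * t2) (s2 * t1)) (min (max_degree V1 E1) (max_degree V2 E2)))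
           \<le> degeneracy (V1 \<times> V2) (dprod_edge E1 E2)
       \<and> degeneracy (V1 \<times> V2) (dprod_edge E1 E2)
           \<le> min (degeneracy V1 E1 * max_degree V2 E2) (degeneracy V2 E2 * max_degree V1 E1)"
proof -
  obtain A1 B1 where A1: "A1 \<subseteq> V1" "B1 \<subseteq> V1" "card A1 = s1" "card B1 = t1"
      "\<forall>a\<in>A1. \<forall>b\<in>B1. E1 a b"
    using K1 unfolding contains_Kst_def by blast
  obtain A2 B2 where A2: "A2 \<subseteq> V2" "B2 \<subseteq> V2" "card A2 = s2" "card B2 = t2"
      "\<forall>a\<in>A2. \<forall>b\<in>B2. E2 a b"
    using K2 unfolding contains_Kst_def by blast
  have "V1 \<noteq> {}" "V2 \<noteq> {}" using A1 A2 st1 st2 by auto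
  have "min (s1 * t2) (s2 * t1) \<le> degeneracy (V1 \<times> V2) (dprod_edge E1 E2)"
    using biclique_dprod_le_degeneracy[OF G1 G2 A1(1,2,5) A2(1,2,5)] A1(3,4) A2(3,4)
    by (simp add: mult.commute)
  then show ?thesis
    using degeneracy_mult_le_degeneracy_dprod[OF G1 G2]
      min_max_degree_le_degeneracy_dprod[OF G1 G2 \<open>V1 \<noteq> {}\<close> \<open>V2 \<noteq> {}\<close>]
      degeneracy_dprod_le_fst[OF G1 G2] degeneracy_dprod_le_snd[OF G1 G2]
    by simp
qed

end
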